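(* Consider Algorithm ProxSVRG (described in the context) with $b=1$, $\eta=1/(3Ln)$, $m=n$, and $T$ a multiple of $m$. Then the output $x_a$ satisfies $$\mathbb E\big[\|\mathcal G_\eta(x_a)\|^2\big]\le \frac{18Ln^2}{3n-2}\cdot\frac{F(x^0)-F(x^* )}{T},$$ where $x^*$ is an optimal solution of $\min_x F(x)$.
   Context: Setting: Let $n,d\ge 1$ be integers and $[n]=\{1,\dots,n\}$. Let $f_1,\dots,f_n:\mathbb R^d\to\mathbb R$ be differentiable (possibly nonconvex) functions, each $L$-smooth for some $L>0$, i.e. $\|\nabla f_i(x)-\nabla f_i(y)\|\le L\|x-y\|$ for all $x,y\in\mathbb R^d$ and $i\in[n]$. Let $f=\frac1n\sum_{i=1}^n f_i$. Let $h:\mathbb R^d\to\mathbb R\cup\{+\infty\}$ be proper, lower semicontinuous and convex, with closed domain. Let $F=f+h$, and let $x^*$ be a global minimizer of $F$ on $\mathbb R^d$ (assumed to exist). For $\eta>0$, $\mathrm{prox}_{\eta h}(x):=\arg\min_{y\in\mathbb R^d}\big(h(y)+\frac1{2\eta}\|y-x\|^2\big)$, and the gradient mapping is $\mathcal G_\eta(x):=\frac1\eta\big[x-\mathrm{prox}_{\eta h}(x-\eta\nabla f(x))\big]$. Algorithm ProxSVRG$(x^0,T,m,b,\eta)$: Given $x^0\in\mathbb R^d$, positive integers $T,m,b$ and $\eta>0$, let $S=\lceil T/m\rceil$ and set $\tilde x^0=x^0_m=x^0$. For $s=0,\dots,S-1$: set $x^{s+1}_0=x^s_m$ and $g^{s+1}=\frac1n\sum_{i=1}^n\nabla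 f_i(\tilde x^s)$; for $t=0,\dots,m-1$: draw a multiset $I_t$ of $b$ indices, each drawn independently and uniformly at random from $[n]$ (with replacement, independently of all previous draws), set $v^{s+1}_t=\frac1b\sum_{i\in I_t}\big(\nabla f_i(x^{s+1}_t)-\nabla f_i(\tilde x^s)\big)+g^{s+1}$ and $x^{s+1}_{t+1}=\mathrm{prox}_{\eta h}(x^{s+1}_t-\eta v^{s+1}_t)$; after the inner loop set $\tilde x^{s+1}=x^{s+1}_m$. The output $x_a$ is chosen uniformly at random from $\{x^{s+1}_t: 0\le t\le m-1,\ 0\le s\le S-1\}$. Expectations are over all randomness of the algorithm. *)

theory Defs
  imports "HOL-Analysis.Analysis" "HOL-Probability.Probability"
begin

definition ext_proper :: "('a \<Rightarrow> ereal) \<Rightarrow> bool" where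
  "ext_proper h \<longleftrightarrow> (\<forall>x. h x \<noteq> -\<infinity>) \<and> (\<exists>x. h x \<noteq> \<infinity>)"

definition ext_lsc :: "('a::topological_space \<Rightarrow> ereal) \<Rightarrow> bool" where
  "ext_lsc h \<longleftrightarrow> (\<forall>c::real. closed {x. h x \<le> ereal c})"

definition ext_convex :: "('a::real_vector \<Rightarrow> ereal) \<Rightarrow> bool" where
  "ext_convex h \<longleftrightarrow> (\<forall>x y u. 0 \<le> u \<and> u \<le> 1 \<longrightarrow>
      h ((1 - u) *\<^sub>R x + u *\<^sub>R y) \<le> ereal (1 - u) * h x + ereal u * h y)"

definition ext_dom :: "('a \<Rightarrow> ereal) \<Rightarrow> 'a set" where
  "ext_dom h = {x. h x \<noteq> \<infinity>}"

definition prox :: "('a::real_normed_vector \<Rightarrow> ereal) \<Rightarrow> real \<Rightarrow> 'a \<Rightarrow> 'a" where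
  "prox h eta x = (THE y. \<forall>z. h y + ereal ((norm (y - x))\<^sup>2 / (2 * eta))
                             \<le> h z + ereal ((norm (z - x))\<^sup>2 / (2 * eta)))"

definition avg_grad :: "nat \<Rightarrow> (nat \<Rightarrow> 'a \<Rightarrow> 'a::real_vector) \<Rightarrow> 'a \<Rightarrow> 'a" where
  "avg_grad n gf x = (1 / real n) *\<^sub>R (\<Sum>i<n. gf i x)"

definition grad_mapping ::
  "nat \<Rightarrow> (nat \<Rightarrow> 'a \<Rightarrow> 'a::real_normed_vector) \<Rightarrow> ('a \<Rightarrow> ereal) \<Rightarrow> real \<Rightarrow> 'a \<Rightarrow> 'a" where
  "grad_mapping n gf h eta x = (1 / eta) *\<^sub>R (x - prox h eta (x - eta *\<^sub>R avg_grad n gf x))"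

text \<open>Iterates of ProxSVRG, indexed globally: step k = s*m + t (s = epoch, t = inner step).
  The state is (current iterate x, current snapshot x~). The random choices are
  w (k, j) for k the global inner step and j < b the position in the minibatch I_t.
  The first component of svrg_state ... k is x^{s+1}_t for k = s*m + t.\<close>
fun svrg_state ::
  "nat \<Rightarrow> (nat \<Rightarrow> 'a \<Rightarrow> 'a::real_normed_vector) \<Rightarrow> ('a \<Rightarrow> ereal) \<Rightarrow> 'a \<Rightarrow> nat \<Rightarrow> nat \<Rightarrow> real
     \<Rightarrow> (nat \<times> nat \<Rightarrow> nat) \<Rightarrow> nat \<Rightarrow> 'a \<times> 'a" where
  "svrg_state n gf h x0 m b eta w 0 = (x0, x0)"
| "svrg_state n gf h x0 m b eta w (Suc k) =
     (let (x, xs) = svrg_state n gf h x0 m b eta w k;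
          snap = (if k mod m = 0 then x else xs);
          v = (1 / real b) *\<^sub>R (\<Sum>j<b. gf (w (k, j)) x - gf (w (k, j)) snap)
              + avg_grad n gf snap
      in (prox h eta (x - eta *\<^sub>R v), snap))"

definition svrg_iter where
  "svrg_iter n gf h x0 m b eta w k = fst (svrg_state n gf h x0 m b eta w k)"

definition svrg_steps :: "nat \<Rightarrow> nat \<Rightarrow> nat" where
  "svrg_steps T m = nat \<lceil>real T / real m\<rceil> * m"

text \<open>Sample space of the index draws: uniform over all maps {0..<S*m} x {0..<b} -> {0..<n}
  (i.i.d. uniform draws with replacement), together with the uniform output index.\<close>
definition svrg_space :: "nat \<Rightarrow> nat \<Rightarrow> nat \<Rightarrow> nat \<Rightarrow> ((nat \<times> nat \<Rightarrow> nat) \<times> nat) pmf" where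
  "svrg_space n T m b = pmf_of_set
     ((PiE ({0..<svrg_steps T m} \<times> {0..<b}) (\<lambda>_. {0..<n})) \<times> {0..<svrg_steps T m})"

definition svrg_expected_gm ::
  "nat \<Rightarrow> (nat \<Rightarrow> 'a \<Rightarrow> 'a::real_normed_vector) \<Rightarrow> ('a \<Rightarrow> ereal) \<Rightarrow> 'a \<Rightarrow> nat \<Rightarrow> nat \<Rightarrow> nat \<Rightarrow> real \<Rightarrow> real" where
  "svrg_expected_gm n gf h x0 T m b eta =
     measure_pmf.expectation (svrg_space n T m b)
       (\<lambda>(w, a). (norm (grad_mapping n gf h eta (svrg_iter n gf h x0 m b eta w a)))\<^sup>2)"

end

theory Submission
  imports Defs
begin

text \<open>With b = 1 the estimator v = grad f_i(x) - grad f_i(x~) + grad f(x~) satisfies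
  |v - grad f(x)| <= 2L |x - x~| on every sample path, so no expectation is needed until the end.
  The prox optimality conditions at the new iterate and at the exact proximal gradient point,
  the descent lemma and Young's inequality give, for one inner step,
    F(x_{t+1}) + eta/2 |G(x_t)|^2 + (1/(2 eta) - L/2) |x_{t+1} - x_t|^2
      <= F(x_t) + 2 eta L^2 |x_t - x~|^2.
  Within an epoch |x_t - x~|^2 <= t sum_{j<t} |x_{j+1} - x_j|^2, and when
  2 eta L^2 n (n - 1) <= 1/(2 eta) - L/2, as for eta = 1/(3Ln), the Lyapunov term
  2 eta L^2 n (n - t) sum_{j<t} |x_{j+1} - x_j|^2 absorbs these errors. Hence on every path
  sum_{k<T} |G(x_k)|^2 <= (2/eta) (F(x0) - F(x_opt)) = 6Ln (F(x0) - F(x_opt)), and averaging over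
  the output index gives the claim, with room to spare.\<close>

lemma lsc_attains_min_on_compact:
  fixes g :: "'a::metric_space \<Rightarrow> ereal"
  assumes closed_sublevel: "\<And>c::real. closed {x. g x \<le> ereal c}"
    and K: "compact K" "K \<noteq> {}"
  shows "\<exists>y\<in>K. \<forall>z\<in>K. g y \<le> g z"
proof -
  define c where "c = (INF z\<in>K. g z)"
  define Fm where "Fm = (\<lambda>r. {x. g x \<le> ereal r}) ` {r. c < ereal r}"
  have "K \<inter> \<Inter>Fm \<noteq> {}"
  proof (rule compact_imp_fip[OF K(1)])
    show "closed S" if "S \<in> Fm" for S using that closed_sublevel unfolding Fm_def by auto
  next
    fix F' assume "finite F'" "F' \<subseteq> Fm"
    then obtain R where R: "R \<subseteq> {r. c < ereal r}" "finite R" "F' = (\<lambda>r. {x. g x \<le> ereal r}) ` R"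
      unfolding Fm_def by (metis finite_subset_image)
    show "K \<inter> \<Inter>F' \<noteq> {}"
    proof (cases "R = {}")
      case True then show ?thesis using R K by auto
    next
      case False
      then have "Min R \<in> R" using R by simp
      then have "c < ereal (Min R)" using R by auto
      then obtain z where z: "z \<in> K" "g z < ereal (Min R)" unfolding c_def by (auto simp: INF_less_iff)
      have "g z \<le> ereal r" if "r \<in> R" for r
        using z(2) Min_le[OF R(2) that] by (metis ereal_less_eq(3) less_imp_le order_trans)
      then have "z \<in> K \<inter> \<Inter>F'" using z R by auto
      then show ?thesis by blast
    qed
  qed
  then obtain y where y: "y \<in> K" "\<And>r. c < ereal r \<Longrightarrow> g y \<le> ereal r" unfolding Fm_def by auto
  have "g y \<le> c"
  proof (rule ccontr)
    assume "\<not> g y \<le> c"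
    then have "c < g y" by auto
    then obtain r where "c < ereal r" "ereal r < g y" using ereal_dense2 by blast
    with y show False by force
  qed
  moreover have "\<forall>z\<in>K. c \<le> g z" unfolding c_def by (auto intro: INF_lower)
  ultimately show ?thesis using y(1) by (meson order_trans)
qed

lemma closed_sublevel_add_continuous:
  fixes h :: "'a::metric_space \<Rightarrow> ereal" and q :: "'a \<Rightarrow> real"
  assumes closed_sublevel: "\<And>c::real. closed {x. h x \<le> ereal c}" and q: "continuous_on UNIV q"
  shows "closed {x. h x + ereal (q x) \<le> ereal c}"
proof -
  have eq: "{x. h x + ereal (q x) \<le> ereal c} = (\<Inter>r. {x. h x \<le> ereal r} \<union> {x. q x \<le> c - r})"
  proof (intro set_eqI iffI)
    fix x assume "x \<in> {x. h x + ereal (q x) \<le> ereal c}"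
    then have x: "h x + ereal (q x) \<le> ereal c" by simp
    show "x \<in> (\<Inter>r. {x. h x \<le> ereal r} \<union> {x. q x \<le> c - r})"
    proof -
      have "h x \<le> ereal r \<or> q x \<le> c - r" for r
      proof (cases "h x \<le> ereal r")
        case False
        then have "ereal r < h x" by simp
        with x show ?thesis by (cases "h x") auto
      qed simp
      then show ?thesis by blast
    qed
  next
    fix x assume x: "x \<in> (\<Inter>r. {x. h x \<le> ereal r} \<union> {x. q x \<le> c - r})"
    show "x \<in> {x. h x + ereal (q x) \<le> ereal c}"
    proof (rule ccontr)
      assume "x \<notin> {x. h x + ereal (q x) \<le> ereal c}"
      then have "ereal (c - q x) < h x" by (cases "h x") auto
      then obtain r where r: "ereal (c - q x) < ereal r" "ereal r < h x" using ereal_dense2 by blast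
      from x have "h x \<le> ereal r \<or> q x \<le> c - r" by blast
      with r show False by auto
    qed
  qed
  show ?thesis unfolding eq
    by (intro closed_INT ballI closed_Un closed_sublevel closed_Collect_le q continuous_on_const)
qed

lemma ext_proper_finite:
  assumes "ext_proper h" "h x \<noteq> \<infinity>"
  obtains r where "h x = ereal r"
  using assms unfolding ext_proper_def by (cases "h x") auto

text \<open>The cone comes from the minimum of h on the unit ball around a point of dom h,
  propagated outwards by convexity.\<close>
lemma ext_convex_cone_minorant:
  fixes h :: "'a::euclidean_space \<Rightarrow> ereal"
  assumes hp: "ext_proper h" and hl: "ext_lsc h" and hc: "ext_convex h"
  shows "\<exists>p mr C. h p \<noteq> \<infinity> \<and> C \<ge> 0 \<and> (\<forall>y. ereal (mr - C * norm (y - p)) \<le> h y)"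
proof -
  obtain p where "h p \<noteq> \<infinity>" using hp unfolding ext_proper_def by auto
  then obtain hpr where hpr: "h p = ereal hpr" by (rule ext_proper_finite[OF hp])
  obtain y0 where "\<forall>z\<in>cball p 1. h y0 \<le> h z"
    using lsc_attains_min_on_compact[of h "cball p 1"] hl unfolding ext_lsc_def by auto
  then have y0: "\<And>z. z \<in> cball p 1 \<Longrightarrow> h y0 \<le> h z" by blast
  have "h y0 \<noteq> \<infinity>" using y0[of p] hpr by auto
  then obtain mr where mr: "h y0 = ereal mr" by (rule ext_proper_finite[OF hp])
  define C where "C = hpr - mr"
  have C0: "C \<ge> 0" using y0[of p] mr hpr C_def by simp
  have "ereal (mr - C * norm (y - p)) \<le> h y" for y
  proof (cases "norm (y - p) \<le> 1")
    case True
    then have "ereal mr \<le> h y" using y0[of y] mr by (simp add: dist_norm norm_minus_commute)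
    moreover have "mr - C * norm (y - p) \<le> mr" using C0 by simp
    ultimately show ?thesis by (meson ereal_less_eq(3) order_trans)
  next
    case False
    define t where "t = norm (y - p)"
    have t1: "t > 1" using False t_def by simp
    define q where "q = (1 - 1 / t) *\<^sub>R p + (1 / t) *\<^sub>R y"
    have "q - p = (1 / t) *\<^sub>R (y - p)" unfolding q_def by (simp add: algebra_simps)
    moreover have "y \<noteq> p" using t1 t_def by auto
    ultimately have "norm (q - p) = 1" using t1 unfolding t_def by simp
    then have hq: "ereal mr \<le> h q" using y0[of q] mr by (simp add: dist_norm norm_minus_commute)
    have cv: "h q \<le> ereal (1 - 1 / t) * h p + ereal (1 / t) * h y"
      using hc t1 unfolding ext_convex_def q_def by auto
    show ?thesis
    proof (cases "h y")
      case (real hy)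
      have "mr \<le> (1 - 1 / t) * hpr + 1 / t * hy" using order_trans[OF hq cv] real hpr by simp
      then have "mr * t \<le> ((1 - 1 / t) * hpr + 1 / t * hy) * t"
        using t1 by (intro mult_right_mono) auto
      also have "\<dots> = (t - 1) * hpr + hy" using t1 by (simp add: field_simps)
      finally have "mr - C * t \<le> hy" using C0 unfolding C_def by (simp add: algebra_simps)
      then show ?thesis using real t_def by simp
    qed (use hp in \<open>auto simp: ext_proper_def\<close>)
  qed
  then show ?thesis using hpr C0 by (intro exI[of _ p] exI[of _ mr] exI[of _ C]) auto
qed

lemma le_of_sq_sub_le_affine:
  fixes t a B D :: real
  assumes "t \<ge> 0" "a \<ge> 0" "D \<ge> 0" "t \<ge> a \<Longrightarrow> (t - a)\<^sup>2 \<le> B + D * t"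
  shows "t \<le> 1 + 2 * a + \<bar>B\<bar> + D"
proof (cases "t \<le> 1 \<or> t \<le> 2 * a")
  case False
  then have t: "t > 1" "t > 2 * a" by auto
  have "(t - a)\<^sup>2 \<le> B + D * t" using assms t by auto
  then have "t * t \<le> \<bar>B\<bar> + (D + 2 * a) * t - a * a" by (simp add: power2_eq_square algebra_simps)
  also have "\<dots> \<le> \<bar>B\<bar> * t + (D + 2 * a) * t"
    using mult_left_mono[of 1 t "\<bar>B\<bar>"] t mult_nonneg_nonneg[of a a] assms(2) by linarith
  finally have "t * t \<le> (\<bar>B\<bar> + D + 2 * a) * t" by (simp add: algebra_simps)
  then show ?thesis using t by simp
qed (use assms in auto)

definition prox_minimizer :: "('a::real_normed_vector \<Rightarrow> ereal) \<Rightarrow> real \<Rightarrow> 'a \<Rightarrow> 'a \<Rightarrow> bool" where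
  "prox_minimizer h eta u y \<longleftrightarrow> (\<forall>z. h y + ereal ((norm (y - u))\<^sup>2 / (2 * eta))
                                      \<le> h z + ereal ((norm (z - u))\<^sup>2 / (2 * eta)))"

lemma prox_eq_The_prox_minimizer: "prox h eta u = (THE y. prox_minimizer h eta u y)"
  unfolding prox_def prox_minimizer_def ..

text \<open>The sublevel set of the prox objective through a point of dom h is compact, because the
  quadratic term dominates the cone minorant of h.\<close>
lemma prox_minimizer_exists:
  fixes h :: "'a::euclidean_space \<Rightarrow> ereal"
  assumes hp: "ext_proper h" and hl: "ext_lsc h" and hc: "ext_convex h" and eta: "eta > 0"
  shows "\<exists>y. prox_minimizer h eta u y"
proof -
  obtain p mr C where p: "h p \<noteq> \<infinity>" and C0: "C \<ge> 0" and lb: "\<And>y. ereal (mr - C * norm (y - p)) \<le> h y"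
    using ext_convex_cone_minorant[OF hp hl hc] by blast
  obtain hpr where hpr: "h p = ereal hpr" using p by (rule ext_proper_finite[OF hp])
  define qf where "qf = (\<lambda>y. (norm (y - u))\<^sup>2 / (2 * eta))"
  define c0 where "c0 = hpr + qf p"
  define S where "S = {y. h y + ereal (qf y) \<le> ereal c0}"
  have qcont: "continuous_on UNIV qf" unfolding qf_def using eta by (intro continuous_intros) auto
  have clS: "\<And>c. closed {y. h y + ereal (qf y) \<le> ereal c}"
    using closed_sublevel_add_continuous[OF _ qcont] hl unfolding ext_lsc_def by blast
  define a where "a = norm (p - u)"
  define R where "R = 1 + 2 * a + \<bar>2 * eta * (c0 - mr)\<bar> + 2 * eta * C"
  have bS: "S \<subseteq> cball p R"
  proof
    fix y assume "y \<in> S"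
    then have yS: "h y + ereal (qf y) \<le> ereal c0" unfolding S_def by simp
    define t where "t = norm (y - p)"
    have "ereal (mr - C * t) + ereal (qf y) \<le> h y + ereal (qf y)"
      using lb[of y] unfolding t_def by (cases "h y") auto
    then have "mr - C * t + qf y \<le> c0" using yS by (metis order_trans plus_ereal.simps(1) ereal_less_eq(3))
    then have q: "(norm (y - u))\<^sup>2 \<le> 2 * eta * (c0 - mr) + (2 * eta * C) * t"
      unfolding qf_def using eta by (simp add: field_simps)
    have "t \<le> R" unfolding R_def
    proof (rule le_of_sq_sub_le_affine)
      show "0 \<le> t" "0 \<le> a" "0 \<le> 2 * eta * C" using eta C0 unfolding t_def a_def by auto
      assume ta: "a \<le> t"
      have "t - a \<le> norm (y - u)" unfolding t_def a_def
        using norm_triangle_ineq[of "y - u" "u - p"] by (simp add: norm_minus_commute)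
      then have "(t - a)\<^sup>2 \<le> (norm (y - u))\<^sup>2" using ta by (intro power_mono) auto
      then show "(t - a)\<^sup>2 \<le> 2 * eta * (c0 - mr) + 2 * eta * C * t" using q by simp
    qed
    then show "y \<in> cball p R" unfolding t_def by (simp add: dist_norm norm_minus_commute)
  qed
  have cS: "compact S" using bS clS[of c0] unfolding S_def
    by (metis bounded_cball bounded_subset compact_eq_bounded_closed)
  have pS: "p \<in> S" unfolding S_def c0_def using hpr by simp
  obtain y where y: "y \<in> S" "\<And>z. z \<in> S \<Longrightarrow> h y + ereal (qf y) \<le> h z + ereal (qf z)"
    using lsc_attains_min_on_compact[OF clS cS] pS by blast
  have "h y + ereal (qf y) \<le> h z + ereal (qf z)" for z
  proof (cases "z \<in> S")
    case False
    then have "ereal c0 < h z + ereal (qf z)" unfolding S_def by auto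
    moreover have "h y + ereal (qf y) \<le> ereal c0" using y(1) unfolding S_def by simp
    ultimately show ?thesis by (meson less_imp_le order_trans)
  qed (use y in auto)
  then show ?thesis unfolding prox_minimizer_def qf_def by (intro exI[of _ y]) simp
qed

lemma le_of_le_add_scaled:
  fixes A B K :: real
  assumes K: "K \<ge> 0" and le: "\<And>s. 0 < s \<Longrightarrow> s \<le> 1 \<Longrightarrow> A \<le> B + s * K"
  shows "A \<le> B"
proof (rule field_le_epsilon)
  fix e :: real assume e: "e > 0"
  define s where "s = min 1 (e / (K + 1))"
  have s: "0 < s" "s \<le> 1" using e K unfolding s_def by auto
  have "s * K \<le> e / (K + 1) * K" using K unfolding s_def by (intro mult_right_mono) auto
  also have "\<dots> \<le> e" using e K by (simp add: field_simps)
  finally show "A \<le> B + e" using le[OF s] by simp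
qed

lemma norm_add_scaleR_sq:
  fixes a b :: "'a::real_inner"
  shows "(norm (a + s *\<^sub>R b))\<^sup>2 = (norm a)\<^sup>2 + 2 * s * inner a b + s\<^sup>2 * (norm b)\<^sup>2"
  by (simp only: power2_norm_eq_inner)
     (simp add: inner_add_left inner_add_right inner_commute power2_eq_square algebra_simps)

text \<open>Compare y with the points y + s (z - y) and let s tend to 0.\<close>
lemma prox_minimizer_subgradient:
  fixes h :: "'a::euclidean_space \<Rightarrow> ereal"
  assumes hp: "ext_proper h" and hc: "ext_convex h" and eta: "eta > 0"
    and "prox_minimizer h eta u y"
  shows "\<exists>hy. h y = ereal hy \<and> (\<forall>z. ereal (hy + inner (u - y) (z - y) / eta) \<le> h z)"
proof -
  have ymin: "\<And>z. h y + ereal ((norm (y - u))\<^sup>2 / (2 * eta)) \<le> h z + ereal ((norm (z - u))\<^sup>2 / (2 * eta))"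
    using assms(4) unfolding prox_minimizer_def by blast
  obtain p where p: "h p \<noteq> \<infinity>" using hp unfolding ext_proper_def by auto
  have "h y \<noteq> \<infinity>"
  proof
    assume "h y = \<infinity>"
    then show False using ymin[of p] p hp unfolding ext_proper_def by auto
  qed
  then obtain hy where hy: "h y = ereal hy" by (rule ext_proper_finite[OF hp])
  have "ereal (hy + inner (u - y) (z - y) / eta) \<le> h z" for z
  proof (cases "h z")
    case (real hz)
    have "hy \<le> hz + inner (y - u) (z - y) / eta + s * ((norm (z - y))\<^sup>2 / (2 * eta))"
      if s: "0 < s" "s \<le> 1" for s
    proof -
      define w where "w = (1 - s) *\<^sub>R y + s *\<^sub>R z"
      have "h w \<le> ereal (1 - s) * h y + ereal s * h z"
        using hc s unfolding ext_convex_def w_def by auto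
      then have cv: "h w \<le> ereal ((1 - s) * hy + s * hz)" using hy real by simp
      have wu: "w - u = (y - u) + s *\<^sub>R (z - y)" unfolding w_def by (simp add: algebra_simps)
      have "ereal (hy + (norm (y - u))\<^sup>2 / (2 * eta)) \<le> h w + ereal ((norm (w - u))\<^sup>2 / (2 * eta))"
        using ymin[of w] hy by simp
      also have "\<dots> \<le> ereal ((1 - s) * hy + s * hz) + ereal ((norm (w - u))\<^sup>2 / (2 * eta))"
        using cv by (rule add_right_mono)
      finally have "hy + (norm (y - u))\<^sup>2 / (2 * eta) \<le> (1 - s) * hy + s * hz +
          ((norm (y - u))\<^sup>2 + 2 * s * inner (y - u) (z - y) + s\<^sup>2 * (norm (z - y))\<^sup>2) / (2 * eta)"
        unfolding wu norm_add_scaleR_sq by simp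
      then have "s * hy \<le> s * (hz + inner (y - u) (z - y) / eta + s * ((norm (z - y))\<^sup>2 / (2 * eta)))"
        using eta by (simp add: field_simps power2_eq_square)
      then show ?thesis using s by simp
    qed
    then have "hy \<le> hz + inner (y - u) (z - y) / eta"
      by (rule le_of_le_add_scaled[rotated]) (use eta in auto)
    moreover have "inner (u - y) (z - y) = - inner (y - u) (z - y)"
      by (simp add: inner_diff_left)
    ultimately show ?thesis using real by simp
  qed (use hp in \<open>auto simp: ext_proper_def\<close>)
  then show ?thesis using hy by blast
qed

lemma prox_minimizer_unique:
  fixes h :: "'a::euclidean_space \<Rightarrow> ereal"
  assumes hp: "ext_proper h" and hc: "ext_convex h" and eta: "eta > 0"
    and y1: "prox_minimizer h eta u y1" and y2: "prox_minimizer h eta u y2"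
  shows "y1 = y2"
proof -
  obtain h1 where h1: "h y1 = ereal h1" "\<And>z. ereal (h1 + inner (u - y1) (z - y1) / eta) \<le> h z"
    using prox_minimizer_subgradient[OF hp hc eta y1] by blast
  obtain h2 where h2: "h y2 = ereal h2" "\<And>z. ereal (h2 + inner (u - y2) (z - y2) / eta) \<le> h z"
    using prox_minimizer_subgradient[OF hp hc eta y2] by blast
  have "h1 + inner (u - y1) (y2 - y1) / eta \<le> h2" using h1(2)[of y2] h2(1) by simp
  moreover have "h2 + inner (u - y2) (y1 - y2) / eta \<le> h1" using h2(2)[of y1] h1(1) by simp
  ultimately have "(inner (u - y1) (y2 - y1) + inner (u - y2) (y1 - y2)) / eta \<le> 0"
    by (simp add: add_divide_distrib)
  then have "inner (u - y1) (y2 - y1) + inner (u - y2) (y1 - y2) \<le> 0"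
    using eta by (simp add: divide_le_0_iff)
  moreover have "inner (u - y1) (y2 - y1) + inner (u - y2) (y1 - y2) = inner (y2 - y1) (y2 - y1)"
    by (simp add: inner_diff_left inner_diff_right inner_commute)
  ultimately have "inner (y2 - y1) (y2 - y1) = 0" using inner_ge_zero[of "y2 - y1"] by linarith
  then show ?thesis by simp
qed

lemma prox_minimizer_prox:
  fixes h :: "'a::euclidean_space \<Rightarrow> ereal"
  assumes "ext_proper h" "ext_lsc h" "ext_convex h" "eta > 0"
  shows "prox_minimizer h eta u (prox h eta u)"
proof -
  obtain y where y: "prox_minimizer h eta u y" using prox_minimizer_exists[OF assms] by blast
  show ?thesis unfolding prox_eq_The_prox_minimizer
    by (rule theI[where P = "prox_minimizer h eta u", OF y]) (rule prox_minimizer_unique[OF assms(1,3,4) _ y])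
qed

lemma prox_subgradient:
  fixes h :: "'a::euclidean_space \<Rightarrow> ereal"
  assumes hp: "ext_proper h" and hl: "ext_lsc h" and hc: "ext_convex h" and eta: "eta > 0"
  shows "\<exists>hy. h (prox h eta u) = ereal hy \<and>
     (\<forall>z. ereal (hy + inner (u - prox h eta u) (z - prox h eta u) / eta) \<le> h z)"
  using prox_minimizer_subgradient[OF hp hc eta prox_minimizer_prox[OF hp hl hc eta]] .

lemma descent_lemma:
  fixes fi :: "'a::euclidean_space \<Rightarrow> real" and gi :: "'a \<Rightarrow> 'a"
  assumes der: "\<And>x. (fi has_derivative (\<lambda>v. gi x \<bullet> v)) (at x)"
    and lip: "\<And>x y. norm (gi x - gi y) \<le> L * norm (x - y)"
  shows "fi y \<le> fi x + gi x \<bullet> (y - x) + L / 2 * (norm (y - x))\<^sup>2"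
proof -
  define d where "d = y - x"
  define k where "k = (\<lambda>t. fi (x + t *\<^sub>R d) - t * (gi x \<bullet> d) - L / 2 * t\<^sup>2 * (norm d)\<^sup>2)"
  have D: "\<exists>y. DERIV k t :> y \<and> y \<le> 0" if t: "0 \<le> t" "t \<le> 1" for t :: real
  proof -
    have "((\<lambda>t. x + t *\<^sub>R d) has_derivative (\<lambda>s. s *\<^sub>R d)) (at t)"
      by (auto intro!: derivative_eq_intros)
    from has_derivative_compose[OF this der]
    have c: "((\<lambda>t. fi (x + t *\<^sub>R d)) has_derivative (\<lambda>s. gi (x + t *\<^sub>R d) \<bullet> (s *\<^sub>R d))) (at t)"
      by simp
    have fe: "(\<lambda>s. gi (x + t *\<^sub>R d) \<bullet> (s *\<^sub>R d)) = (*) (gi (x + t *\<^sub>R d) \<bullet> d)"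
      by (auto simp: fun_eq_iff)
    have c2: "((\<lambda>t. fi (x + t *\<^sub>R d)) has_real_derivative (gi (x + t *\<^sub>R d) \<bullet> d)) (at t)"
      unfolding has_field_derivative_def using c[unfolded fe] .
    have kd: "(k has_real_derivative (gi (x + t *\<^sub>R d) \<bullet> d - gi x \<bullet> d - L * t * (norm d)\<^sup>2)) (at t)"
      unfolding k_def by (rule derivative_eq_intros c2 refl | simp)+
    have "gi (x + t *\<^sub>R d) \<bullet> d - gi x \<bullet> d = (gi (x + t *\<^sub>R d) - gi x) \<bullet> d" by (simp add: inner_diff_left)
    also have "\<dots> \<le> norm (gi (x + t *\<^sub>R d) - gi x) * norm d" by (rule norm_cauchy_schwarz)
    also have "\<dots> \<le> (L * norm (t *\<^sub>R d)) * norm d" using lip[of "x + t *\<^sub>R d" x] by (simp add: mult_right_mono)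
    also have "\<dots> = L * t * (norm d)\<^sup>2" using t by (simp add: power2_eq_square)
    finally have le: "gi (x + t *\<^sub>R d) \<bullet> d - gi x \<bullet> d \<le> L * t * (norm d)\<^sup>2" .
    show ?thesis using kd le by (intro exI[of _ "gi (x + t *\<^sub>R d) \<bullet> d - gi x \<bullet> d - L * t * (norm d)\<^sup>2"]) auto
  qed
  have "k 0 \<ge> k 1" by (rule DERIV_nonpos_imp_nonincreasing[OF _ D]) auto
  then show ?thesis unfolding k_def d_def by (simp add: algebra_simps)
qed

lemma descent_lemma_avg:
  fixes f :: "nat \<Rightarrow> 'a::euclidean_space \<Rightarrow> real" and gf :: "nat \<Rightarrow> 'a \<Rightarrow> 'a"
  assumes n: "n \<ge> 1"
    and grad: "\<And>i x. i < n \<Longrightarrow> (f i has_derivative (\<lambda>v. gf i x \<bullet> v)) (at x)"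
    and smooth: "\<And>i x y. i < n \<Longrightarrow> norm (gf i x - gf i y) \<le> L * norm (x - y)"
  shows "(\<Sum>j<n. f j y) / real n
    \<le> (\<Sum>j<n. f j x) / real n + avg_grad n gf x \<bullet> (y - x) + L / 2 * (norm (y - x))\<^sup>2"
proof -
  have "(\<Sum>j<n. f j y) \<le> (\<Sum>j<n. f j x + gf j x \<bullet> (y - x) + L / 2 * (norm (y - x))\<^sup>2)"
    by (rule sum_mono) (rule descent_lemma[OF grad smooth], auto)
  also have "\<dots> = (\<Sum>j<n. f j x) + real n * (avg_grad n gf x \<bullet> (y - x)) + real n * (L / 2 * (norm (y - x))\<^sup>2)"
    using n by (simp add: sum.distrib avg_grad_def inner_sum_left)
  finally show ?thesis using n by (simp add: field_simps)
qed

text \<open>A step y = prox(x - eta v) with an inexact gradient v, compared with the exact proximal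
  gradient point xb = prox(x - eta g): the hypotheses are the subgradient inequalities of the two
  prox points and the descent lemma, and the error v - g is absorbed by Young's inequality
  against |xb - y|^2.\<close>
lemma inexact_prox_grad_step:
  fixes x y xb g v :: "'a::real_inner"
  assumes eta: "eta > 0"
    and prox_y: "hy + inner (x - eta *\<^sub>R v - y) (xb - y) / eta \<le> hxb"
    and prox_xb: "hxb + inner (x - eta *\<^sub>R g - xb) (x - xb) / eta \<le> hx"
    and descent: "fy \<le> fx + inner g (y - x) + L / 2 * (norm (y - x))\<^sup>2"
  shows "fy + hy + (norm (x - xb))\<^sup>2 / (2 * eta) + (1 / (2 * eta) - L / 2) * (norm (y - x))\<^sup>2
         \<le> fx + hx + eta / 2 * (norm (v - g))\<^sup>2"
proof -
  define A where "A = (norm (x - y))\<^sup>2 / eta"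
  define B where "B = (norm (xb - y))\<^sup>2 / eta"
  define C where "C = (norm (x - xb))\<^sup>2 / eta"
  define P where "P = inner (x - y) (xb - y) / eta"
  define Q where "Q = inner (v - g) (xb - y)"
  have e1: "inner (x - eta *\<^sub>R v - y) (xb - y) / eta = P - inner v (xb - y)"
    unfolding P_def using eta by (simp add: inner_diff_left inner_add_left field_simps)
  have e2: "inner (x - eta *\<^sub>R g - xb) (x - xb) / eta = C - inner g (x - xb)"
    unfolding C_def using eta by (simp add: inner_diff_left inner_add_left field_simps power2_norm_eq_inner)
  have "(norm (x - xb))\<^sup>2 = (norm (x - y))\<^sup>2 - 2 * inner (x - y) (xb - y) + (norm (xb - y))\<^sup>2"
  proof -
    have "(norm (x - xb))\<^sup>2 = inner ((x - y) - (xb - y)) ((x - y) - (xb - y))"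
      by (simp add: power2_norm_eq_inner)
    then show ?thesis
      by (simp add: inner_diff_left inner_diff_right inner_commute power2_norm_eq_inner)
  qed
  then have e3: "C = A - 2 * P + B" unfolding A_def B_def C_def P_def
    by (simp add: diff_divide_distrib add_divide_distrib)
  have e4: "Q = inner v (xb - y) + inner g (y - x) + inner g (x - xb)" unfolding Q_def
    by (simp add: inner_diff_left inner_diff_right)
  have young: "Q \<le> eta / 2 * (norm (v - g))\<^sup>2 + B / 2"
  proof -
    have "0 \<le> (norm (eta *\<^sub>R (v - g) - (xb - y)))\<^sup>2" by simp
    also have "\<dots> = eta\<^sup>2 * (norm (v - g))\<^sup>2 - 2 * eta * Q + (norm (xb - y))\<^sup>2"
      unfolding Q_def power2_norm_eq_inner
      by (simp add: inner_diff_left inner_diff_right inner_commute power2_eq_square algebra_simps)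
    finally have "2 * eta * Q \<le> eta\<^sup>2 * (norm (v - g))\<^sup>2 + (norm (xb - y))\<^sup>2" by simp
    then show ?thesis unfolding B_def using eta by (simp add: field_simps power2_eq_square)
  qed
  have "(norm (x - xb))\<^sup>2 / (2 * eta) = C / 2"
    "(1 / (2 * eta) - L / 2) * (norm (y - x))\<^sup>2 = A / 2 - L / 2 * (norm (y - x))\<^sup>2"
    unfolding A_def C_def by (simp_all add: field_simps norm_minus_commute)
  then show ?thesis using prox_y prox_xb descent e1 e2 e3 e4 young by linarith
qed

lemma svrg_estimator_error:
  fixes gf :: "nat \<Rightarrow> 'a \<Rightarrow> 'a::euclidean_space"
  assumes n: "n \<ge> 1" and i: "i < n"
    and smooth: "\<And>i x y. i < n \<Longrightarrow> norm (gf i x - gf i y) \<le> L * norm (x - y)"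
  shows "norm ((gf i x - gf i xs + avg_grad n gf xs) - avg_grad n gf x) \<le> 2 * L * norm (x - xs)"
proof -
  have "norm (\<Sum>j<n. gf j x - gf j xs) \<le> (\<Sum>j<n. norm (gf j x - gf j xs))" by (rule norm_sum)
  also have "\<dots> \<le> (\<Sum>j<n. L * norm (x - xs))" by (rule sum_mono) (use smooth in auto)
  finally have "norm (\<Sum>j<n. gf j x - gf j xs) \<le> real n * (L * norm (x - xs))" by simp
  moreover have "avg_grad n gf x - avg_grad n gf xs = (1 / real n) *\<^sub>R (\<Sum>j<n. gf j x - gf j xs)"
    unfolding avg_grad_def by (simp add: sum_subtractf scaleR_diff_right)
  ultimately have avg: "norm (avg_grad n gf x - avg_grad n gf xs) \<le> L * norm (x - xs)"
    using n by (simp add: pos_divide_le_eq mult.commute)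
  have "(gf i x - gf i xs + avg_grad n gf xs) - avg_grad n gf x
      = (gf i x - gf i xs) - (avg_grad n gf x - avg_grad n gf xs)"
    by (simp add: algebra_simps)
  also have "norm \<dots> \<le> norm (gf i x - gf i xs) + norm (avg_grad n gf x - avg_grad n gf xs)"
    by (rule norm_triangle_ineq4)
  also have "\<dots> \<le> L * norm (x - xs) + L * norm (x - xs)" using avg smooth[OF i, of x xs] by simp
  finally show ?thesis by simp
qed

lemma prox_svrg_step:
  fixes f :: "nat \<Rightarrow> 'a::euclidean_space \<Rightarrow> real" and gf :: "nat \<Rightarrow> 'a \<Rightarrow> 'a" and h :: "'a \<Rightarrow> ereal"
    and x xs :: 'a
  assumes n: "n \<ge> 1"
    and grad: "\<And>i x. i < n \<Longrightarrow> (f i has_derivative (\<lambda>v. gf i x \<bullet> v)) (at x)"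
    and smooth: "\<And>i x y. i < n \<Longrightarrow> norm (gf i x - gf i y) \<le> L * norm (x - y)"
    and hp: "ext_proper h" and hl: "ext_lsc h" and hc: "ext_convex h" and eta: "eta > 0"
    and hx: "h x = ereal hx" and i: "i < n"
  defines "y \<equiv> prox h eta (x - eta *\<^sub>R (gf i x - gf i xs + avg_grad n gf xs))"
  shows "\<exists>hy. h y = ereal hy \<and>
     (\<Sum>j<n. f j y) / real n + hy + eta / 2 * (norm (grad_mapping n gf h eta x))\<^sup>2
       + (1 / (2 * eta) - L / 2) * (norm (y - x))\<^sup>2
     \<le> (\<Sum>j<n. f j x) / real n + hx + 2 * eta * L\<^sup>2 * (norm (x - xs))\<^sup>2"
proof -
  define v where "v = gf i x - gf i xs + avg_grad n gf xs"
  define g where "g = avg_grad n gf x"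
  define xb where "xb = prox h eta (x - eta *\<^sub>R g)"
  obtain hy where hy: "h y = ereal hy" "\<And>z. ereal (hy + inner ((x - eta *\<^sub>R v) - y) (z - y) / eta) \<le> h z"
    using prox_subgradient[OF hp hl hc eta, of "x - eta *\<^sub>R v"] unfolding y_def v_def by blast
  obtain hxb where hxb: "h xb = ereal hxb" "\<And>z. ereal (hxb + inner ((x - eta *\<^sub>R g) - xb) (z - xb) / eta) \<le> h z"
    using prox_subgradient[OF hp hl hc eta, of "x - eta *\<^sub>R g"] unfolding xb_def by blast
  have "(\<Sum>j<n. f j y) / real n + hy + (norm (x - xb))\<^sup>2 / (2 * eta) + (1 / (2 * eta) - L / 2) * (norm (y - x))\<^sup>2
         \<le> (\<Sum>j<n. f j x) / real n + hx + eta / 2 * (norm (v - g))\<^sup>2"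
  proof (rule inexact_prox_grad_step[OF eta])
    show "hy + inner (x - eta *\<^sub>R v - y) (xb - y) / eta \<le> hxb" using hy(2)[of xb] hxb(1) by simp
    show "hxb + inner (x - eta *\<^sub>R g - xb) (x - xb) / eta \<le> hx" using hxb(2)[of x] hx by simp
    show "(\<Sum>j<n. f j y) / real n \<le> (\<Sum>j<n. f j x) / real n + inner g (y - x) + L / 2 * (norm (y - x))\<^sup>2"
      unfolding g_def by (rule descent_lemma_avg[OF n grad smooth])
  qed
  moreover have "eta / 2 * (norm (grad_mapping n gf h eta x))\<^sup>2 = (norm (x - xb))\<^sup>2 / (2 * eta)"
  proof -
    have G: "norm (grad_mapping n gf h eta x) = norm (x - xb) / eta"
      unfolding grad_mapping_def xb_def g_def using eta by simp
    show ?thesis unfolding G using eta by (simp add: power2_eq_square field_simps)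
  qed
  moreover have "eta / 2 * (norm (v - g))\<^sup>2 \<le> 2 * eta * L\<^sup>2 * (norm (x - xs))\<^sup>2"
  proof -
    have "norm (v - g) \<le> 2 * L * norm (x - xs)"
      unfolding v_def g_def by (rule svrg_estimator_error[OF n i smooth])
    then have "(norm (v - g))\<^sup>2 \<le> (2 * L * norm (x - xs))\<^sup>2" by (intro power_mono) auto
    then have "eta / 2 * (norm (v - g))\<^sup>2 \<le> eta / 2 * (2 * L * norm (x - xs))\<^sup>2"
      using eta by (intro mult_left_mono) auto
    then show ?thesis by (simp add: power2_eq_square mult_ac)
  qed
  ultimately show ?thesis using hy(1) by auto
qed

lemma svrg_state_Suc_single_sample:
  "svrg_state n gf h x0 m 1 eta w (Suc k) =
    (let S = svrg_state n gf h x0 m 1 eta w k;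
         sn = (if k mod m = 0 then fst S else snd S)
     in (prox h eta (fst S - eta *\<^sub>R (gf (w (k, 0)) (fst S) - gf (w (k, 0)) sn + avg_grad n gf sn)), sn))"
  by (simp add: Let_def split: prod.split)

lemma svrg_snapshot:
  assumes "t < n"
  shows "snd (svrg_state n gf h x0 n 1 eta w (s * n + t + 1)) = svrg_iter n gf h x0 n 1 eta w (s * n)"
  using assms
proof (induction t)
  case 0
  then show ?case unfolding svrg_iter_def
    by (simp add: svrg_state_Suc_single_sample svrg_state_Suc_single_sample[unfolded One_nat_def] Let_def
        del: svrg_state.simps)
next
  case (Suc t)
  then have "(s * n + Suc t) mod n \<noteq> 0" by simp
  then have "snd (svrg_state n gf h x0 n 1 eta w (Suc (s * n + Suc t))) = snd (svrg_state n gf h x0 n 1 eta w (s * n + Suc t))"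
    by (simp only: svrg_state_Suc_single_sample Let_def if_False snd_conv)
  with Suc show ?case by simp
qed

lemma svrg_iter_Suc:
  fixes gf :: "nat \<Rightarrow> 'a \<Rightarrow> 'a::real_normed_vector" and h x0 eta w
  assumes n: "n \<ge> 1" and t: "t < n"
  defines "X \<equiv> svrg_iter n gf h x0 n 1 eta w"
  shows "X (s * n + t + 1) = prox h eta (X (s * n + t) - eta *\<^sub>R
      (gf (w (s * n + t, 0)) (X (s * n + t)) - gf (w (s * n + t, 0)) (X (s * n)) + avg_grad n gf (X (s * n))))"
proof (cases t)
  case 0
  then show ?thesis unfolding X_def svrg_iter_def
    by (simp add: svrg_state_Suc_single_sample svrg_state_Suc_single_sample[unfolded One_nat_def] Let_def
        del: svrg_state.simps)
next
  case (Suc t')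
  define k where "k = s * n + t"
  define S where "S = svrg_state n gf h x0 n 1 eta w k"
  have "k mod n \<noteq> 0" using t Suc unfolding k_def by simp
  then have "svrg_state n gf h x0 n 1 eta w (Suc k) =
    (prox h eta (fst S - eta *\<^sub>R (gf (w (k, 0)) (fst S) - gf (w (k, 0)) (snd S) + avg_grad n gf (snd S))), snd S)"
    unfolding S_def by (simp only: svrg_state_Suc_single_sample Let_def if_False)
  moreover have "snd S = X (s * n)"
    unfolding S_def X_def k_def using svrg_snapshot[of t' n] Suc t by simp
  ultimately show ?thesis unfolding X_def svrg_iter_def k_def[symmetric] S_def by simp
qed

lemma sq_add_le_of_sq_le:
  fixes r d t P :: real
  assumes "r \<ge> 0" "d \<ge> 0" "t \<ge> 0" "P \<ge> 0" "r\<^sup>2 \<le> t * P"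
  shows "(r + d)\<^sup>2 \<le> (t + 1) * (P + d\<^sup>2)"
proof (cases "t = 0")
  case True
  then have "r = 0" using assms by simp
  then show ?thesis using True assms by simp
next
  case False
  then have t: "t > 0" using assms by simp
  have "t * (r + d)\<^sup>2 + (r - t * d)\<^sup>2 = (t + 1) * r\<^sup>2 + t * (t + 1) * d\<^sup>2"
    by (simp add: power2_eq_square algebra_simps)
  moreover have "(t + 1) * r\<^sup>2 \<le> (t + 1) * (t * P)" using assms by (intro mult_left_mono) auto
  moreover have "(t + 1) * (t * P) + t * (t + 1) * d\<^sup>2 = t * ((t + 1) * (P + d\<^sup>2))" by (simp add: algebra_simps)
  ultimately have "t * (r + d)\<^sup>2 \<le> t * ((t + 1) * (P + d\<^sup>2))" using zero_le_power2[of "r - t * d"]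
    by linarith
  then show ?thesis using t by simp
qed

lemma norm_diff_sq_le_sum_steps:
  fixes x :: "nat \<Rightarrow> 'a::real_normed_vector"
  shows "(norm (x t - x 0))\<^sup>2 \<le> real t * (\<Sum>j<t. (norm (x (Suc j) - x j))\<^sup>2)"
proof (induction t)
  case (Suc t)
  have "norm (x (Suc t) - x 0) \<le> norm (x t - x 0) + norm (x (Suc t) - x t)"
    using norm_triangle_ineq[of "x t - x 0" "x (Suc t) - x t"] by simp
  then have "(norm (x (Suc t) - x 0))\<^sup>2 \<le> (norm (x t - x 0) + norm (x (Suc t) - x t))\<^sup>2"
    by (intro power_mono) auto
  also have "\<dots> \<le> (real t + 1) * ((\<Sum>j<t. (norm (x (Suc j) - x j))\<^sup>2) + (norm (x (Suc t) - x t))\<^sup>2)"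
    by (rule sq_add_le_of_sq_le) (use Suc.IH in \<open>auto intro: sum_nonneg\<close>)
  finally show ?case by (simp add: add.commute)
qed simp

lemma ext_proper_minimizer_finite:
  assumes hp: "ext_proper h" and opt: "\<And>x. ereal (\<phi> xstar) + h xstar \<le> ereal (\<phi> x) + h x"
  shows "h xstar \<noteq> \<infinity>"
proof
  assume "h xstar = \<infinity>"
  moreover obtain p where "h p \<noteq> \<infinity>" using hp unfolding ext_proper_def by auto
  ultimately show False using opt[of p] hp unfolding ext_proper_def by (cases "h p") auto
qed

lemma expectation_pmf_of_set_times_le:
  fixes g :: "'w \<Rightarrow> nat \<Rightarrow> real"
  assumes W: "finite W" "W \<noteq> {}" and T: "T > 0" and le: "\<And>w. w \<in> W \<Longrightarrow> (\<Sum>a<T. g w a) \<le> B"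
  shows "measure_pmf.expectation (pmf_of_set (W \<times> {0..<T})) (\<lambda>(w, a). g w a) \<le> B / real T"
proof -
  have "measure_pmf.expectation (pmf_of_set (W \<times> {0..<T})) (\<lambda>(w, a). g w a)
      = (\<Sum>x\<in>W \<times> {0..<T}. (\<lambda>(w, a). g w a) x) / real (card (W \<times> {0..<T}))"
    by (rule integral_pmf_of_set) (use W T in auto)
  also have "\<dots> = (\<Sum>w\<in>W. \<Sum>a<T. g w a) / (real (card W) * real T)"
    by (simp add: sum.cartesian_product[symmetric] card_cartesian_product atLeast0LessThan)
  also have "\<dots> \<le> (\<Sum>w\<in>W. B) / (real (card W) * real T)"
    using le by (intro divide_right_mono sum_mono) auto
  also have "\<dots> = B / real T" using W by (simp add: card_gt_0_iff)
  finally show ?thesis .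
qed

lemma svrg_steps_multiple: "n dvd T \<Longrightarrow> svrg_steps T n = T"
  unfolding svrg_steps_def by (auto simp: real_of_nat_div)

lemma svrg_iter_Suc_is_prox: "\<exists>u. svrg_iter n gf h x0 m b eta w (Suc k) = prox h eta u"
  by (auto simp: svrg_iter_def Let_def split: prod.split)

locale prox_svrg_path =
  fixes n :: nat and L eta :: real and f :: "nat \<Rightarrow> 'a::euclidean_space \<Rightarrow> real"
    and gf :: "nat \<Rightarrow> 'a \<Rightarrow> 'a" and h :: "'a \<Rightarrow> ereal" and x0 :: 'a
    and w :: "nat \<times> nat \<Rightarrow> nat" and T :: nat
  assumes n: "n \<ge> 1"
    and grad: "\<And>i x. i < n \<Longrightarrow> (f i has_derivative (\<lambda>v. gf i x \<bullet> v)) (at x)"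
    and smooth: "\<And>i x y. i < n \<Longrightarrow> norm (gf i x - gf i y) \<le> L * norm (x - y)"
    and hp: "ext_proper h" and hl: "ext_lsc h" and hc: "ext_convex h"
    and eta: "eta > 0"
    and step_size: "2 * eta * L\<^sup>2 * real n * (real n - 1) \<le> 1 / (2 * eta) - L / 2"
    and h_x0: "h x0 \<noteq> \<infinity>"
    and samples: "\<And>k. k < T \<Longrightarrow> w (k, 0) < n"
begin

abbreviation X where "X \<equiv> svrg_iter n gf h x0 n 1 eta w"

abbreviation F where "F z \<equiv> (\<Sum>j<n. f j z) / real n + real_of_ereal (h z)"

abbreviation G where "G k \<equiv> (norm (grad_mapping n gf h eta (X k)))\<^sup>2"

lemma h_X: "h (X k) = ereal (real_of_ereal (h (X k)))"
proof (cases k)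
  case 0
  then show ?thesis using h_x0 hp by (auto simp: svrg_iter_def elim: ext_proper_finite)
next
  case (Suc k')
  then obtain u where "X k = prox h eta u" using svrg_iter_Suc_is_prox by blast
  then show ?thesis using prox_subgradient[OF hp hl hc eta, of u] by auto
qed

lemma inner_step:
  assumes "(s + 1) * n \<le> T" "t < n"
  defines "k \<equiv> s * n + t"
  shows "F (X (k + 1)) + eta / 2 * G k + (1 / (2 * eta) - L / 2) * (norm (X (k + 1) - X k))\<^sup>2
    \<le> F (X k) + 2 * eta * L\<^sup>2 * (norm (X k - X (s * n)))\<^sup>2"
proof -
  have i: "w (k, 0) < n" using assms unfolding k_def by (intro samples) (simp add: algebra_simps)
  obtain hy where "h (X (k + 1)) = ereal hy" and le:
    "(\<Sum>j<n. f j (X (k + 1))) / real n + hy + eta / 2 * G k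
       + (1 / (2 * eta) - L / 2) * (norm (X (k + 1) - X k))\<^sup>2
     \<le> F (X k) + 2 * eta * L\<^sup>2 * (norm (X k - X (s * n)))\<^sup>2"
    using prox_svrg_step[where f = f and gf = gf and L = L and xs = "X (s * n)",
        OF n grad smooth hp hl hc eta h_X i]
      svrg_iter_Suc[OF n assms(2), of gf h x0 eta w s] unfolding k_def by auto
  then have "hy = real_of_ereal (h (X (k + 1)))" by simp
  with le show ?thesis by simp
qed

text \<open>Lyapunov function of an epoch: the bonus 2 eta L^2 n (n - t) times the path length so far
  pays for the distance of later inner iterates from the snapshot.\<close>
lemma epoch:
  assumes "(s + 1) * n \<le> T" "t \<le> n"
  shows "F (X (s * n + t)) + eta / 2 * (\<Sum>k<s * n + t. G k)
      + 2 * eta * L\<^sup>2 * real n * (real n - real t) * (\<Sum>j<t. (norm (X (s * n + Suc j) - X (s * n + j)))\<^sup>2)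
    \<le> F (X (s * n)) + eta / 2 * (\<Sum>k<s * n. G k)"
  using assms(2)
proof (induction t)
  case (Suc t)
  define c where "c = 2 * eta * L\<^sup>2 * real n"
  define P where "P = (\<Sum>j<t. (norm (X (s * n + Suc j) - X (s * n + j)))\<^sup>2)"
  define d where "d = (norm (X (s * n + t + 1) - X (s * n + t)))\<^sup>2"
  have t: "t < n" using Suc.prems by simp
  have c0: "c \<ge> 0" unfolding c_def using eta by simp
  have "(norm (X (s * n + t) - X (s * n)))\<^sup>2 \<le> real t * P"
    using norm_diff_sq_le_sum_steps[of "\<lambda>j. X (s * n + j)" t] unfolding P_def by simp
  also have "\<dots> \<le> real n * P" using t unfolding P_def by (intro mult_right_mono sum_nonneg) auto
  finally have drift: "2 * eta * L\<^sup>2 * (norm (X (s * n + t) - X (s * n)))\<^sup>2 \<le> c * P"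
    unfolding c_def using eta by (simp add: mult_left_mono mult.assoc)
  have "c * (real n - real (Suc t)) \<le> c * (real n - 1)" using c0 by (intro mult_left_mono) auto
  also have "\<dots> \<le> 1 / (2 * eta) - L / 2" using step_size unfolding c_def by (simp add: mult.assoc)
  finally have bonus: "c * (real n - real (Suc t)) * d \<le> (1 / (2 * eta) - L / 2) * d"
    unfolding d_def by (intro mult_right_mono) auto
  have IH: "F (X (s * n + t)) + eta / 2 * (\<Sum>k<s * n + t. G k) + c * (real n - real t) * P
      \<le> F (X (s * n)) + eta / 2 * (\<Sum>k<s * n. G k)"
    using Suc t unfolding c_def P_def by simp
  have "F (X (s * n + t + 1)) + eta / 2 * (\<Sum>k<s * n + t. G k) + eta / 2 * G (s * n + t)
      + (c * (real n - real (Suc t)) * P + c * (real n - real (Suc t)) * d)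
      \<le> F (X (s * n)) + eta / 2 * (\<Sum>k<s * n. G k)"
  proof -
    have "c * (real n - real t) * P = c * (real n - real (Suc t)) * P + c * P"
      by (simp add: algebra_simps)
    then show ?thesis using IH inner_step[OF assms(1) t] drift bonus unfolding d_def by linarith
  qed
  moreover have "(\<Sum>j<Suc t. (norm (X (s * n + Suc j) - X (s * n + j)))\<^sup>2) = P + d"
    unfolding P_def d_def by simp
  ultimately show ?case unfolding c_def by (simp add: algebra_simps)
qed simp

lemma after_epochs:
  assumes "S * n \<le> T"
  shows "F (X (S * n)) + eta / 2 * (\<Sum>k<S * n. G k) \<le> F x0"
  using assms
proof (induction S)
  case 0
  then show ?case by (simp add: svrg_iter_def)
next
  case (Suc S)
  then show ?case using epoch[of S n] by (simp add: add.commute)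
qed

lemma sum_G_le_gap:
  fixes xstar :: 'a
  assumes "S * n \<le> T"
    and opt: "\<And>x. ereal ((\<Sum>i<n. f i xstar) / real n) + h xstar \<le> ereal ((\<Sum>i<n. f i x) / real n) + h x"
  shows "(\<Sum>k<S * n. G k) \<le> 2 / eta * (F x0 - F xstar)"
proof -
  have "h xstar \<noteq> \<infinity>" by (rule ext_proper_minimizer_finite[OF hp opt])
  then obtain hs where "h xstar = ereal hs" by (rule ext_proper_finite[OF hp])
  then have "F xstar \<le> F (X (S * n))" using opt[of "X (S * n)"] h_X[of "S * n"]
    by (metis plus_ereal.simps(1) ereal_less_eq(3) real_of_ereal.simps(1))
  then have "eta / 2 * (\<Sum>k<S * n. G k) \<le> F x0 - F xstar" using after_epochs[OF assms(1)] by linarith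
  then show ?thesis using eta by (simp add: field_simps)
qed

end

theorem svrg_expected_gm_le:
  fixes f :: "nat \<Rightarrow> 'a::euclidean_space \<Rightarrow> real" and gf :: "nat \<Rightarrow> 'a \<Rightarrow> 'a" and h :: "'a \<Rightarrow> ereal"
  assumes n: "n \<ge> 1"
    and grad: "\<And>i x. i < n \<Longrightarrow> (f i has_derivative (\<lambda>v. gf i x \<bullet> v)) (at x)"
    and smooth: "\<And>i x y. i < n \<Longrightarrow> norm (gf i x - gf i y) \<le> L * norm (x - y)"
    and hp: "ext_proper h" and hl: "ext_lsc h" and hc: "ext_convex h"
    and eta: "eta > 0"
    and step_size: "2 * eta * L\<^sup>2 * real n * (real n - 1) \<le> 1 / (2 * eta) - L / 2"
    and h0: "h x0 = ereal h0" and hs: "h xstar = ereal hs"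
    and opt: "\<And>x. ereal ((\<Sum>i<n. f i xstar) / real n) + h xstar \<le> ereal ((\<Sum>i<n. f i x) / real n) + h x"
    and T: "T > 0" "n dvd T"
  shows "svrg_expected_gm n gf h x0 T n 1 eta
    \<le> 2 / eta * ((\<Sum>i<n. f i x0) / real n + h0 - ((\<Sum>i<n. f i xstar) / real n + hs)) / real T"
proof -
  define W where "W = PiE ({0..<T} \<times> {0..<1}) (\<lambda>_::nat \<times> nat. {0..<n})"
  have "(\<Sum>a<T. (norm (grad_mapping n gf h eta (svrg_iter n gf h x0 n 1 eta w a)))\<^sup>2)
      \<le> 2 / eta * ((\<Sum>i<n. f i x0) / real n + h0 - ((\<Sum>i<n. f i xstar) / real n + hs))"
    if "w \<in> W" for w
  proof -
    interpret prox_svrg_path n L eta f gf h x0 w T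
      using n grad smooth hp hl hc eta step_size h0 \<open>w \<in> W\<close>
      by unfold_locales (auto simp: W_def PiE_iff)
    have "T div n * n = T" using T(2) by simp
    then show ?thesis using sum_G_le_gap[of "T div n" xstar] opt h0 hs by simp
  qed
  then show ?thesis
    unfolding svrg_expected_gm_def svrg_space_def svrg_steps_multiple[OF T(2)] W_def[symmetric]
    by (intro expectation_pmf_of_set_times_le) (use T n in \<open>auto simp: W_def PiE_eq_empty_iff intro: finite_PiE\<close>)
qed

theorem theorem1:
  fixes n :: nat and L :: real and T :: nat
    and f :: "nat \<Rightarrow> 'a::euclidean_space \<Rightarrow> real" and gf :: "nat \<Rightarrow> 'a \<Rightarrow> 'a"
    and h :: "'a \<Rightarrow> ereal" and x0 xstar :: 'a
  assumes n: "n \<ge> 1"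
    and L: "L > 0"
    and grad: "\<And>i x. i < n \<Longrightarrow> (f i has_derivative (\<lambda>v. gf i x \<bullet> v)) (at x)"
    and smooth: "\<And>i x y. i < n \<Longrightarrow> norm (gf i x - gf i y) \<le> L * norm (x - y)"
    and h_proper: "ext_proper h" and h_lsc: "ext_lsc h" and h_convex: "ext_convex h"
    and h_dom: "closed (ext_dom h)"
    and opt: "\<And>x. ereal ((\<Sum>i<n. f i xstar) / real n) + h xstar
                   \<le> ereal ((\<Sum>i<n. f i x) / real n) + h x"
    and T: "T > 0" "n dvd T"
  shows "ereal (svrg_expected_gm n gf h x0 T n 1 (1 / (3 * L * real n)))
         \<le> ereal (18 * L * (real n)\<^sup>2 / (3 * real n - 2) / real T)
           * ((ereal ((\<Sum>i<n. f i x0) / real n) + h x0)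
              - (ereal ((\<Sum>i<n. f i xstar) / real n) + h xstar))"
proof -
  define eta where "eta = 1 / (3 * L * real n)"
  define C where "C = 18 * L * (real n)\<^sup>2 / (3 * real n - 2) / real T"
  have eta: "eta > 0" "2 * eta * L\<^sup>2 * real n * (real n - 1) \<le> 1 / (2 * eta) - L / 2"
    unfolding eta_def using n L by (auto simp: power2_eq_square field_simps)
  have C: "C > 0" "2 / eta / real T \<le> C"
    unfolding C_def eta_def using n L T(1) by (auto simp: field_simps power2_eq_square)
  obtain hs where hs: "h xstar = ereal hs"
    using ext_proper_finite[OF h_proper ext_proper_minimizer_finite[OF h_proper opt]] .
  show ?thesis
  proof (cases "h x0")
    case (real h0)
    define D where "D = (\<Sum>i<n. f i x0) / real n + h0 - ((\<Sum>i<n. f i xstar) / real n + hs)"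
    have "D \<ge> 0" using opt[of x0] unfolding D_def real hs by simp
    have "svrg_expected_gm n gf h x0 T n 1 eta \<le> 2 / eta * D / real T"
      unfolding D_def
      by (rule svrg_expected_gm_le[OF n grad smooth h_proper h_lsc h_convex eta real hs opt T])
    also have "\<dots> = 2 / eta / real T * D" by simp
    also have "\<dots> \<le> C * D" using C(2) \<open>D \<ge> 0\<close> by (rule mult_right_mono)
    finally show ?thesis unfolding eta_def[symmetric] C_def[symmetric] D_def real hs by simp
  next
    case PInf
    then show ?thesis unfolding C_def[symmetric] using C(1) hs by simp
  qed (use h_proper in \<open>simp add: ext_proper_def\<close>)
qed

end
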